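(* Consider an additive noise model on $d$ real random variables with causal DAG $\mathcal{G}$: $x_i=f_i(\mathrm{pa}(x_i))+\epsilon_i$, with twice differentiable $f_i$ and mutually independent noises i.i.d. with smooth positive density $p^\epsilon$, so that $p(\mathbf{x})=\prod_{i=1}^d p^\epsilon(x_i-f_i(\mathrm{pa}(x_i)))$. Let $x_l$ be a leaf of $\mathcal{G}$, let $p(\mathbf{x}_{-l})=\prod_{i\neq l}p^\epsilon(x_i-f_i(\mathrm{pa}(x_i)))$, and let $\Delta_l=(\delta_j)_{j\neq l}$ with $\delta_j=\frac{\partial}{\partial x_j}\log p(\mathbf{x})-\frac{\partial}{\partial x_j}\log p(\mathbf{x}_{-l})$. Then at every point $\mathbf{x}$ where $H_{l,l}(\log p(\mathbf{x}))\neq 0$, for every $j\neq l$, $$\delta_j = H_{l,j}(\log p(\mathbf{x}))\cdot \frac{\frac{\partial}{\partial x_l}\log p(\mathbf{x})}{H_{l,l}(\log p(\mathbf{x}))},$$ i.e. $\Delta_l = H_l(\log p(\mathbf{x}))\cdot \frac{\nabla_{x_l}\log p(\mathbf{x})}{H_{l,l}(\log p(\mathbf{x}))}$ restricted to the coordinates $j\neq l$.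
   Context: $H(\log p(\mathbf{x}))$ is the Hessian of $\log p$ (the Jacobian of the score $\nabla_{\mathbf{x}}\log p(\mathbf{x})$), $H_{i,j}$ its $(i,j)$ entry and $H_l$ its $l$-th row. $\mathrm{pa}(x_i)$ denotes the parents of $x_i$ in $\mathcal{G}$; a leaf is a node with no children. *)

theory Defs
  imports "HOL-Analysis.Analysis"
begin

definition partial_deriv :: "(real^'n \<Rightarrow> real) \<Rightarrow> 'n \<Rightarrow> real^'n \<Rightarrow> real" where
  "partial_deriv F j x = deriv (\<lambda>t. F (x + t *\<^sub>R axis j 1)) 0"

definition hessian_entry :: "(real^'n \<Rightarrow> real) \<Rightarrow> 'n \<Rightarrow> 'n \<Rightarrow> real^'n \<Rightarrow> real" where
  "hessian_entry F i j x = partial_deriv (\<lambda>y. partial_deriv F i y) j x"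

definition anm_density :: "(real \<Rightarrow> real) \<Rightarrow> ('n \<Rightarrow> real^'n \<Rightarrow> real) \<Rightarrow> real^'n \<Rightarrow> real" where
  "anm_density pe f x = (\<Prod>i\<in>UNIV. pe (x$i - f i x))"

definition anm_density_minus :: "(real \<Rightarrow> real) \<Rightarrow> ('n \<Rightarrow> real^'n \<Rightarrow> real) \<Rightarrow> 'n \<Rightarrow> real^'n \<Rightarrow> real" where
  "anm_density_minus pe f l x = (\<Prod>i\<in>UNIV - {l}. pe (x$i - f i x))"

end

theory Submission
  imports Defs
begin

text \<open>Since \<open>x\<^sub>l\<close> is a leaf, \<open>log p(x) = log p(x\<^sub>-\<^sub>l) + \<phi>(x\<^sub>l - f\<^sub>l(x))\<close> with \<open>\<phi> = log p\<^sup>\<epsilon>\<close>,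
  where neither \<open>log p(x\<^sub>-\<^sub>l)\<close> nor \<open>f\<^sub>l\<close> depends on \<open>x\<^sub>l\<close>. Hence
  \<open>\<partial>\<^sub>l log p = \<phi>'(r)\<close>, \<open>H\<^sub>l\<^sub>l = \<phi>''(r)\<close> and \<open>H\<^sub>l\<^sub>j = -\<phi>''(r) \<partial>\<^sub>jf\<^sub>l\<close> for the residual
  \<open>r = x\<^sub>l - f\<^sub>l(x)\<close>, while \<open>\<delta>\<^sub>j = -\<phi>'(r) \<partial>\<^sub>jf\<^sub>l\<close>; the factor \<open>\<phi>''(r)\<close> cancels.\<close>

lemma partial_derivI:
  assumes "((\<lambda>t. F (x + t *\<^sub>R axis j 1)) has_real_derivative D) (at 0)"
  shows "partial_deriv F j x = D"
  unfolding partial_deriv_def using assms by (rule DERIV_imp_deriv)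

lemma has_derivative_imp_line_derivative:
  fixes g :: "'a::real_normed_vector \<Rightarrow> real"
  assumes "(g has_derivative Dg) (at x)"
  shows "((\<lambda>t. g (x + t *\<^sub>R v)) has_real_derivative Dg v) (at 0)"
proof -
  have line: "((\<lambda>t::real. x + t *\<^sub>R v) has_derivative (\<lambda>t. t *\<^sub>R v)) (at 0)"
    by (auto intro!: derivative_eq_intros)
  have "((\<lambda>t. g (x + t *\<^sub>R v)) has_derivative (\<lambda>t. Dg (t *\<^sub>R v))) (at 0)"
    using diff_chain_at[OF line] assms by (simp add: o_def)
  moreover have "(\<lambda>t. Dg (t *\<^sub>R v)) = (*) (Dg v)"
    using has_derivative_linear[OF assms] by (auto simp: linear_scale fun_eq_iff)
  ultimately show ?thesis by (simp add: has_field_derivative_def)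
qed

lemma partial_deriv_has_derivative:
  assumes "(F has_derivative DF) (at x)"
  shows "partial_deriv F j x = DF (axis j 1)"
  by (rule partial_derivI[OF has_derivative_imp_line_derivative[OF assms]])

lemma line_derivative_residual_own_coordinate:
  assumes h_const: "\<And>t. h (y + t *\<^sub>R axis l 1) = h y"
    and \<phi>: "\<And>t. (\<phi> has_real_derivative \<phi>' t) (at t)"
  shows "((\<lambda>t. \<phi> ((y + t *\<^sub>R axis l 1)$l - h (y + t *\<^sub>R axis l 1)))
           has_real_derivative \<phi>' (y$l - h y)) (at 0)"
proof -
  have "((\<lambda>t. \<phi> (y$l + t - h y)) has_real_derivative \<phi>' (y$l + 0 - h y) * (0 + 1 - 0)) (at 0)"
    by (rule DERIV_chain2[OF \<phi>]) (auto intro!: derivative_eq_intros)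
  then show ?thesis by (simp add: h_const)
qed

lemma line_derivative_residual_other_coordinate:
  assumes "j \<noteq> l"
    and h: "(h has_derivative Dh) (at x)"
    and \<phi>: "\<And>t. (\<phi> has_real_derivative \<phi>' t) (at t)"
  shows "((\<lambda>t. \<phi> ((x + t *\<^sub>R axis j 1)$l - h (x + t *\<^sub>R axis j 1)))
           has_real_derivative - \<phi>' (x$l - h x) * Dh (axis j 1)) (at 0)"
proof -
  have "((\<lambda>t. \<phi> (x$l - h (x + t *\<^sub>R axis j 1))) has_real_derivative
          \<phi>' (x$l - h (x + 0 *\<^sub>R axis j 1)) * (0 - Dh (axis j 1))) (at 0)"
    by (rule DERIV_chain2[OF \<phi>])
      (auto intro!: derivative_eq_intros has_derivative_imp_line_derivative[OF h])
  then show ?thesis using \<open>j \<noteq> l\<close> by (simp add: axis_def)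
qed

lemma leaf_score_difference:
  fixes g h :: "real^'n \<Rightarrow> real" and \<phi> :: "real \<Rightarrow> real" and l :: 'n
  defines "F \<equiv> \<lambda>y. g y + \<phi> (y$l - h y)"
  assumes g_const: "\<And>y t. g (y + t *\<^sub>R axis l 1) = g y"
    and h_const: "\<And>y t. h (y + t *\<^sub>R axis l 1) = h y"
    and g: "g differentiable (at x)"
    and h: "h differentiable (at x)"
    and \<phi>: "\<And>t. (\<phi> has_real_derivative \<phi>' t) (at t)"
    and \<phi>': "\<And>t. (\<phi>' has_real_derivative \<phi>'' t) (at t)"
    and "j \<noteq> l"
    and H_ll: "hessian_entry F l l x \<noteq> 0"
  shows "partial_deriv F j x - partial_deriv g j x
           = hessian_entry F l j x * (partial_deriv F l x / hessian_entry F l l x)"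
proof -
  obtain Dg Dh where Dg: "(g has_derivative Dg) (at x)" and Dh: "(h has_derivative Dh) (at x)"
    using g h by (auto simp: differentiable_def)
  have score_l: "partial_deriv F l = (\<lambda>y. \<phi>' (y$l - h y))"
  proof
    fix y
    have "(\<lambda>t. F (y + t *\<^sub>R axis l 1))
            = (\<lambda>t. g y + \<phi> ((y + t *\<^sub>R axis l 1)$l - h (y + t *\<^sub>R axis l 1)))"
      by (simp add: F_def g_const)
    then show "partial_deriv F l y = \<phi>' (y$l - h y)"
      using DERIV_add[OF DERIV_const line_derivative_residual_own_coordinate[OF h_const \<phi>]]
      by (intro partial_derivI) simp
  qed
  have hess_ll: "hessian_entry F l l x = \<phi>'' (x$l - h x)"
    unfolding hessian_entry_def score_l
    by (rule partial_derivI[OF line_derivative_residual_own_coordinate[OF h_const \<phi>']])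
  have hess_lj: "hessian_entry F l j x = - \<phi>'' (x$l - h x) * Dh (axis j 1)"
    unfolding hessian_entry_def score_l
    by (rule partial_derivI[OF line_derivative_residual_other_coordinate[OF \<open>j \<noteq> l\<close> Dh \<phi>']])
  have score_j: "partial_deriv F j x = Dg (axis j 1) - \<phi>' (x$l - h x) * Dh (axis j 1)"
    unfolding F_def
    by (rule partial_derivI)
      (use DERIV_add[OF has_derivative_imp_line_derivative[OF Dg]
             line_derivative_residual_other_coordinate[OF \<open>j \<noteq> l\<close> Dh \<phi>]] in simp)
  show ?thesis
    using H_ll score_l score_j hess_ll hess_lj partial_deriv_has_derivative[OF Dg, of j]
    by (simp add: field_simps)
qed

lemma ln_anm_density_split:
  assumes "\<And>t. pe t > 0"
  shows "ln (anm_density pe f y) = ln (anm_density_minus pe f l y) + ln (pe (y$l - f l y))"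
proof -
  have "anm_density pe f y = anm_density_minus pe f l y * pe (y$l - f l y)"
    unfolding anm_density_def anm_density_minus_def
    by (simp add: prod.remove[of UNIV l] mult.commute)
  moreover have "anm_density_minus pe f l y > 0"
    unfolding anm_density_minus_def by (rule prod_pos) (use assms in auto)
  ultimately show ?thesis using assms[of "y$l - f l y"] by (simp add: ln_mult)
qed

lemma ln_anm_density_minus_differentiable:
  fixes f :: "'n::finite \<Rightarrow> real^'n \<Rightarrow> real"
  assumes pe_pos: "\<And>t. pe t > 0"
    and pe: "\<And>t. (pe has_real_derivative pe' t) (at t)"
    and f: "\<And>i. f i differentiable (at x)"
  shows "(\<lambda>y. ln (anm_density_minus pe f l y)) differentiable (at x)"
proof -
  have "(\<lambda>y. ln (pe (y$i - f i y))) differentiable (at x)" for i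
  proof -
    have "(\<lambda>y. y$i - f i y) differentiable (at x)"
      by (intro differentiable_diff f bounded_linear_imp_differentiable bounded_linear_vec_nth)
    moreover have "((\<lambda>t. ln (pe t)) has_real_derivative pe' t / pe t) (at t)" for t
      by (rule derivative_eq_intros pe | use pe_pos in force)+
    then have "(\<lambda>t. ln (pe t)) differentiable (at (x$i - f i x))"
      unfolding real_differentiable_def by blast
    ultimately show ?thesis using differentiable_chain_at by (fastforce simp: o_def)
  qed
  moreover have "(\<lambda>y. ln (anm_density_minus pe f l y)) = (\<lambda>y. \<Sum>i\<in>UNIV - {l}. ln (pe (y$i - f i y)))"
    unfolding anm_density_minus_def using pe_pos
    by (auto intro!: ln_prod simp: fun_eq_iff) (metis less_irrefl)
  ultimately show ?thesis by (simp add: differentiable_sum)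
qed

theorem theorem1:
  fixes pa :: "'n::finite \<Rightarrow> 'n set"
    and f :: "'n \<Rightarrow> real^'n \<Rightarrow> real"
    and pe :: "real \<Rightarrow> real"
    and l :: 'n
  assumes dag: "acyclic {(j, i). j \<in> pa i}"
    and f_pa: "\<And>i x y. (\<forall>k\<in>pa i. x$k = y$k) \<Longrightarrow> f i x = f i y"
    and f_twice: "\<And>i. \<exists>Df. (\<forall>x. (f i has_derivative Df x) (at x))
                   \<and> (\<forall>x v. (\<lambda>y. Df y v) differentiable (at x))"
    and pe_pos: "\<And>t. pe t > 0"
    and pe_smooth: "\<And>n t. ((deriv ^^ n) pe has_real_derivative (deriv ^^ Suc n) pe t) (at t)"
    and pe_density: "(pe has_integral 1) UNIV"
    and leaf: "\<And>i. l \<notin> pa i"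
  shows "\<forall>x. hessian_entry (\<lambda>y. ln (anm_density pe f y)) l l x \<noteq> 0 \<longrightarrow>
           (\<forall>j. j \<noteq> l \<longrightarrow>
              partial_deriv (\<lambda>y. ln (anm_density pe f y)) j x
                - partial_deriv (\<lambda>y. ln (anm_density_minus pe f l y)) j x
              = hessian_entry (\<lambda>y. ln (anm_density pe f y)) l j x
                * (partial_deriv (\<lambda>y. ln (anm_density pe f y)) l x
                   / hessian_entry (\<lambda>y. ln (anm_density pe f y)) l l x))"
proof -
  have pe: "(pe has_real_derivative deriv pe t) (at t)"
    and pe': "(deriv pe has_real_derivative deriv (deriv pe) t) (at t)" for t
    using pe_smooth[of 0 t] pe_smooth[of 1 t] by simp_all
  have ln_pe: "((\<lambda>t. ln (pe t)) has_real_derivative deriv pe t / pe t) (at t)" for t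
    by (rule derivative_eq_intros pe | use pe_pos in force)+
  have score_pe: "((\<lambda>t. deriv pe t / pe t) has_real_derivative
      (deriv (deriv pe) t * pe t - deriv pe t * deriv pe t) / (pe t * pe t)) (at t)" for t
    using DERIV_divide[OF pe' pe] pe_pos[of t] by simp
  have f_diff: "f i differentiable (at y)" for i y
    using f_twice[of i] by (auto simp: differentiable_def)
  have leaf_shift: "f i (y + t *\<^sub>R axis l 1) = f i y" for i y t
    by (rule f_pa) (use leaf in \<open>auto simp: axis_def\<close>)
  have log_density_split: "(\<lambda>y. ln (anm_density pe f y))
          = (\<lambda>y. ln (anm_density_minus pe f l y) + ln (pe (y$l - f l y)))"
    by (rule ext) (rule ln_anm_density_split[OF pe_pos])
  have minus_shift: "ln (anm_density_minus pe f l (y + t *\<^sub>R axis l 1)) = ln (anm_density_minus pe f l y)"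
    for y t
    unfolding anm_density_minus_def using leaf_shift by (auto simp: axis_def intro!: prod.cong)
  show ?thesis
    unfolding log_density_split
    using leaf_score_difference[OF minus_shift leaf_shift
        ln_anm_density_minus_differentiable[OF pe_pos pe f_diff] f_diff ln_pe score_pe]
    by blast
qed

end
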